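(* Let $1\le a\le\sqrt3$, $c(a)=\frac98\left(a+\frac1a\right)$, and for $K> c(a)^2/9$ put $\alpha=\frac12\left(3-3a^2+\sqrt{9a^4-4c(a)a^3+4Ka^2}\right)$, $\beta=\frac12\left(3-3a^2-\sqrt{9a^4-4c(a)a^3+4Ka^2}\right)$, $\gamma=\sqrt{Ka^2-c(a)a+9/4}$, and $$T(K,a)=\int_\alpha^\gamma\frac{4a\,ds}{\sqrt{(s-\alpha)(s-\beta)}\sqrt{\gamma^2-s^2}}.$$ Then $\lim_{K\to\infty}T(K,a)=0$.
   Context: $T(K,a)$ is the period of the closed solutions of the Lie–Poisson equation for chains on $\mathrm{SU}(2)$ with left-invariant CR structure parameter $a$ lying on the sphere of radius $\sqrt K$; here it is given by the explicit integral above. *)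

theory Defs
  imports "HOL-Analysis.Analysis"
begin

definition cpar :: "real \<Rightarrow> real" where
  "cpar a = 9/8 * (a + 1/a)"

definition alpha :: "real \<Rightarrow> real \<Rightarrow> real" where
  "alpha K a = (3 - 3*a^2 + sqrt (9*a^4 - 4*cpar a*a^3 + 4*K*a^2)) / 2"

definition beta :: "real \<Rightarrow> real \<Rightarrow> real" where
  "beta K a = (3 - 3*a^2 - sqrt (9*a^4 - 4*cpar a*a^3 + 4*K*a^2)) / 2"

definition gamma :: "real \<Rightarrow> real \<Rightarrow> real" where
  "gamma K a = sqrt (K*a^2 - cpar a*a + 9/4)"

definition Tper :: "real \<Rightarrow> real \<Rightarrow> real" where
  "Tper K a = (LBINT s:{alpha K a..gamma K a}.
      4*a / (sqrt ((s - alpha K a) * (s - beta K a)) * sqrt ((gamma K a)^2 - s^2)))"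

end

theory Submission
  imports Defs "HOL-Real_Asymp.Real_Asymp"
begin

text \<open>
  On the range of integration \<open>s - \<beta> \<ge> \<alpha> - \<beta>\<close> and \<open>\<gamma> + s \<ge> \<gamma>\<close>, so the integrand is at
  most \<open>4a / (\<surd>((\<alpha> - \<beta>) \<gamma>) \<surd>((s - \<alpha>)(\<gamma> - s)))\<close>. Since
  \<open>1 / (p q) \<le> (1/p + 1/q) / \<surd>(p\<^sup>2 + q\<^sup>2)\<close>, the remaining singular factor integrates to
  at most 4 whatever the endpoints are, so \<open>T(K,a) \<le> 16 a / \<surd>((\<alpha> - \<beta>) \<gamma>)\<close>; and both
  \<open>\<alpha> - \<beta>\<close> and \<open>\<gamma>\<close> grow like \<open>\<surd>K\<close>.
\<close>

lemma inverse_sqrt_endpoints_integral: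
  fixes A G :: real
  assumes "A < G"
  shows "set_integrable lborel {A<..<G} (\<lambda>s. 1 / sqrt (s - A) + 1 / sqrt (G - s))"
    and "(LBINT s:{A<..<G}. 1 / sqrt (s - A) + 1 / sqrt (G - s)) = 4 * sqrt (G - A)"
proof -
  let ?f = "\<lambda>s. 1 / sqrt (s - A) + 1 / sqrt (G - s)"
  let ?F = "\<lambda>s. 2 * sqrt (s - A) - 2 * sqrt (G - s)"
  have "DERIV ?F s :> ?f s" if "A < s" "s < G" for s
    using that by (auto intro!: derivative_eq_intros simp: field_simps)
  moreover have "isCont ?f s" if "A < s" "s < G" for s
    using that by (auto intro!: continuous_intros)
  moreover have "((?F \<circ> real_of_ereal) \<longlongrightarrow> - 2 * sqrt (G - A)) (at_right (ereal A))"
    unfolding ereal_tendsto_simps by (auto intro!: tendsto_eq_intros)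
  moreover have "((?F \<circ> real_of_ereal) \<longlongrightarrow> 2 * sqrt (G - A)) (at_left (ereal G))"
    unfolding ereal_tendsto_simps by (auto intro!: tendsto_eq_intros)
  ultimately have FTC:
      "set_integrable lborel (einterval A G) ?f"
      "(LBINT s=ereal A..ereal G. ?f s) = 2 * sqrt (G - A) - - 2 * sqrt (G - A)"
    using interval_integral_FTC_nonneg[of "ereal A" "ereal G" ?F ?f] assms by auto
  then show "set_integrable lborel {A<..<G} ?f"
    by simp
  show "(LBINT s:{A<..<G}. ?f s) = 4 * sqrt (G - A)"
    using FTC(2) assms by (simp add: interval_lebesgue_integral_def)
qed

lemma inverse_mult_le_inverse_sum_div_sqrt:
  fixes p q :: real
  assumes "0 < p" "0 < q"
  shows "1 / (p * q) \<le> (1 / p + 1 / q) / sqrt (p\<^sup>2 + q\<^sup>2)"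
proof -
  have "sqrt (p\<^sup>2 + q\<^sup>2) \<le> sqrt ((p + q)\<^sup>2)"
    using assms by (intro real_sqrt_le_mono) (simp add: power2_eq_square algebra_simps)
  then have "sqrt (p\<^sup>2 + q\<^sup>2) \<le> p + q"
    using assms by simp
  moreover have "0 < sqrt (p\<^sup>2 + q\<^sup>2)"
    using assms by (simp add: add_pos_pos)
  ultimately show ?thesis
    using assms by (simp add: field_simps)
qed

lemma period_integrand_le:
  fixes A B G s :: real
  assumes "B < A" "0 < A" "A < s" "s < G"
  shows "1 / (sqrt ((s - A) * (s - B)) * sqrt (G\<^sup>2 - s\<^sup>2))
    \<le> (1 / sqrt (s - A) + 1 / sqrt (G - s)) / sqrt ((A - B) * G * (G - A))"
proof -
  define p q where "p = sqrt (s - A)" and "q = sqrt (G - s)"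
  have pq: "0 < p" "0 < q" "p\<^sup>2 + q\<^sup>2 = G - A"
    using assms by (auto simp: p_def q_def)
  have "sqrt (A - B) * sqrt G \<le> sqrt (s - B) * sqrt (G + s)"
    using assms by (intro mult_mono) auto
  then have "sqrt ((A - B) * G) * (p * q) \<le> sqrt ((s - A) * (s - B)) * sqrt (G\<^sup>2 - s\<^sup>2)"
    using pq by (simp add: p_def q_def real_sqrt_mult power2_eq_square square_diff_square_factored
        mult_ac mult_left_mono)
  then have "1 / (sqrt ((s - A) * (s - B)) * sqrt (G\<^sup>2 - s\<^sup>2)) \<le> 1 / (p * q) / sqrt ((A - B) * G)"
    using assms pq by (simp add: divide_divide_eq_left' mult.commute frac_le)
  also have "\<dots> \<le> (1 / p + 1 / q) / sqrt (p\<^sup>2 + q\<^sup>2) / sqrt ((A - B) * G)"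
    using pq assms by (intro divide_right_mono inverse_mult_le_inverse_sum_div_sqrt) auto
  finally show ?thesis
    using pq by (simp add: p_def q_def real_sqrt_mult mult.commute)
qed

lemma period_integral_bounds:
  fixes A B G :: real
  assumes "B < A" "0 < A" "0 < G"
  defines "f \<equiv> \<lambda>s. 1 / (sqrt ((s - A) * (s - B)) * sqrt (G\<^sup>2 - s\<^sup>2))"
  shows "0 \<le> (LBINT s:{A..G}. f s)" and "(LBINT s:{A..G}. f s) \<le> 4 / sqrt ((A - B) * G)"
proof -
  have Icc_Ioo: "(LBINT s:{A..G}. f s) = (LBINT s:{A<..<G}. f s)"
    by (rule set_integral_discrete_difference[where X = "{A, G}"]) auto
  have f_nonneg: "0 \<le> f s" if "A < s" "s < G" for s
    using that assms by (auto simp: f_def intro!: power_strict_mono)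
  show "0 \<le> (LBINT s:{A..G}. f s)"
    unfolding Icc_Ioo unfolding set_lebesgue_integral_def
    by (rule Bochner_Integration.integral_nonneg) (simp add: f_nonneg indicator_def)
  show "(LBINT s:{A..G}. f s) \<le> 4 / sqrt ((A - B) * G)"
  proof (cases "A < G")
    case False
    then have "{A<..<G} = {}"
      by simp
    then have "(LBINT s:{A..G}. f s) = 0"
      unfolding Icc_Ioo by (simp add: set_lebesgue_integral_def)
    then show ?thesis
      using assms(1,3) by simp
  next
    case True
    define g where "g = (\<lambda>s. (1 / sqrt (s - A) + 1 / sqrt (G - s)) / sqrt ((A - B) * G * (G - A)))"
    have g: "set_integrable lborel {A<..<G} g"
        "(LBINT s:{A<..<G}. g s) = 4 * sqrt (G - A) / sqrt ((A - B) * G * (G - A))"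
      using inverse_sqrt_endpoints_integral[OF True] by (simp_all add: g_def)
    have "(LBINT s:{A<..<G}. f s) \<le> (LBINT s:{A<..<G}. g s)"
      unfolding set_lebesgue_integral_def
    proof (rule integral_mono')
      show "integrable lborel (\<lambda>s. indicator {A<..<G} s *\<^sub>R g s)"
        using g(1) by (simp add: set_integrable_def)
      show "0 \<le> indicator {A<..<G} s *\<^sub>R g s" for s
        using assms by (simp add: g_def indicator_def)
      show "indicator {A<..<G} s *\<^sub>R f s \<le> indicator {A<..<G} s *\<^sub>R g s" for s
        using period_integrand_le[OF assms(1,2)] by (simp add: f_def g_def indicator_def)
    qed
    also have "\<dots> = 4 / sqrt ((A - B) * G)"
      using True assms by (simp add: g(2) real_sqrt_mult)
    finally show ?thesis
      by (simp add: Icc_Ioo)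
  qed
qed

lemma alpha_minus_beta: "alpha K a - beta K a = sqrt (9*a^4 - 4*cpar a*a^3 + 4*K*a^2)"
  by (simp add: alpha_def beta_def field_simps)

lemma Tper_bounds:
  assumes "0 < a" "beta K a < alpha K a" "0 < alpha K a" "0 < gamma K a"
  shows "0 \<le> Tper K a" and "Tper K a \<le> 16 * a / sqrt ((alpha K a - beta K a) * gamma K a)"
proof -
  define I where "I = (LBINT s:{alpha K a..gamma K a}.
      1 / (sqrt ((s - alpha K a) * (s - beta K a)) * sqrt ((gamma K a)\<^sup>2 - s\<^sup>2)))"
  have Tper_eq: "Tper K a = 4 * a * I"
    unfolding Tper_def I_def set_integral_mult_right[symmetric] by simp
  have I_bounds: "0 \<le> I" "I \<le> 4 / sqrt ((alpha K a - beta K a) * gamma K a)"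
    using period_integral_bounds[of "beta K a" "alpha K a" "gamma K a"] assms(2-4)
    by (simp_all add: I_def)
  show "0 \<le> Tper K a"
    using I_bounds(1) assms(1) by (simp add: Tper_eq)
  have "Tper K a \<le> 4 * a * (4 / sqrt ((alpha K a - beta K a) * gamma K a))"
    unfolding Tper_eq by (rule mult_left_mono[OF I_bounds(2)]) (use assms(1) in simp)
  then show "Tper K a \<le> 16 * a / sqrt ((alpha K a - beta K a) * gamma K a)"
    by simp
qed

theorem mainTheorem6:
  fixes a :: real
  assumes "1 \<le> a" and "a \<le> sqrt 3"
  shows "((\<lambda>K. Tper K a) \<longlongrightarrow> 0) at_top"
proof -
  have a: "0 < a"
    using assms(1) by simp
  define bound where "bound K = 16 * a / sqrt ((alpha K a - beta K a) * gamma K a)" for K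
  have "eventually (\<lambda>K. beta K a < alpha K a \<and> 0 < alpha K a \<and> 0 < gamma K a) at_top"
    unfolding alpha_def beta_def gamma_def by (intro eventually_conj; use a in real_asymp)
  then have "eventually (\<lambda>K. 0 \<le> Tper K a \<and> Tper K a \<le> bound K) at_top"
    by (rule eventually_mono) (simp add: Tper_bounds[OF a] bound_def)
  moreover have "(bound \<longlongrightarrow> 0) at_top"
    unfolding bound_def alpha_minus_beta gamma_def using a by real_asymp
  ultimately show ?thesis
    using tendsto_sandwich[of "\<lambda>_. 0" "\<lambda>K. Tper K a" at_top bound 0]
    by (simp add: eventually_conj_iff)
qed

end
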